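(* Let $\boldsymbol{M}$ be a weight sequence satisfying $\operatorname{(sm)}$ with constants $C_0>0$, $H>1$ (i.e. $\log(m_{p+1}/m_p)\le C_0H^{p+1}$ for all $p\in\mathbb{N}_0$). Then for every $h>0$ one has $\mathcal{L}(C_{\boldsymbol{M},h}(0,\infty))\subset\mathcal{A}_{\boldsymbol{M}_{+1},Hh}(\mathbb{H})$, and $\mathcal{L}\colon C_{\boldsymbol{M},h}(0,\infty)\to\mathcal{A}_{\boldsymbol{M}_{+1},Hh}(\mathbb{H})$ is continuous. Consequently, $\mathcal{L}\colon C_{\{\boldsymbol{M}\}}(0,\infty)\to\mathcal{A}_{\{\boldsymbol{M}_{+1}\}}(\mathbb{H})$ is well-defined and continuous; moreover, it is injective.
   Context: Sequences are of positive reals indexed by $\mathbb{N}_0$; $m_p=M_{p+1}/M_p$. Weight sequence: $M_0=1$, $M_p^2\le M_{p-1}M_{p+1}$ ($p\ge1$), $m_p\to\infty$. $\boldsymbol{M}_{+1}=(M_{p+1})_p$. $\mathbb{H}$ is the open upper half-plane. For a sequence $\boldsymbol{N}$ and $h>0$, $\mathcal{A}_{\boldsymbol{N},h}(\mathbb{H})$ is the Banach space of holomorphic $f$ on $\mathbb{H}$ with norm $\sup_p\sup_{z\in\mathbb{H}}|f^{(p)}(z)|/(h^pN_p)<\infty$, and $\mathcal{A}_{\{\boldsymbol{N}\}}(\mathbb{H})=\bigcup_h\mathcal{A}_{\boldsymbol{N},h}(\mathbb{H})$ (inductive limit). $C_{\boldsymbol{M},h}(0,\infty)$ is the Banach space of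 continuous $\varphi$ on $(0,\infty)$ with norm $\sup_p\sup_{x>0}x^p|\varphi(x)|/(h^pM_p)<\infty$ (no support condition), $C_{\{\boldsymbol{M}\}}(0,\infty)=\bigcup_hC_{\boldsymbol{M},h}(0,\infty)$ (inductive limit). The Laplace transform is $\mathcal{L}(\varphi)(\zeta)=\int_0^\infty\varphi(x)e^{ix\zeta}\,dx$, $\zeta\in\overline{\mathbb{H}}$, considered on $\mathbb{H}$. *)

theory Defs
  imports "HOL-Complex_Analysis.Complex_Analysis"
begin

definition weight_seq :: "(nat \<Rightarrow> real) \<Rightarrow> bool" where
  "weight_seq M \<longleftrightarrow> (\<forall>p. M p > 0) \<and> M 0 = 1 \<and>
     (\<forall>p\<ge>1. (M p)\<^sup>2 \<le> M (p - 1) * M (p + 1)) \<and>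
     filterlim (\<lambda>p. M (Suc p) / M p) at_top sequentially"

definition quot_seq :: "(nat \<Rightarrow> real) \<Rightarrow> nat \<Rightarrow> real" where
  "quot_seq M p = M (Suc p) / M p"

definition sm_cond :: "(nat \<Rightarrow> real) \<Rightarrow> real \<Rightarrow> real \<Rightarrow> bool" where
  "sm_cond M C0 H \<longleftrightarrow> (\<forall>p. ln (quot_seq M (Suc p) / quot_seq M p) \<le> C0 * H ^ (p + 1))"

definition shift_seq :: "(nat \<Rightarrow> real) \<Rightarrow> nat \<Rightarrow> real" where
  "shift_seq M p = M (Suc p)"

definition upper_half :: "complex set" where
  "upper_half = {z. Im z > 0}"

definition CM :: "(nat \<Rightarrow> real) \<Rightarrow> real \<Rightarrow> (real \<Rightarrow> complex) set" where
  "CM M h = {\<phi>. continuous_on {0<..} \<phi> \<and>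
      (\<exists>C. \<forall>p. \<forall>x>0. x ^ p * norm (\<phi> x) / (h ^ p * M p) \<le> C)}"

definition CM_norm :: "(nat \<Rightarrow> real) \<Rightarrow> real \<Rightarrow> (real \<Rightarrow> complex) \<Rightarrow> real" where
  "CM_norm M h \<phi> = Sup {x ^ p * norm (\<phi> x) / (h ^ p * M p) | p x. x > 0}"

definition CM_roumieu :: "(nat \<Rightarrow> real) \<Rightarrow> (real \<Rightarrow> complex) set" where
  "CM_roumieu M = (\<Union>h\<in>{0<..}. CM M h)"

definition AN :: "(nat \<Rightarrow> real) \<Rightarrow> real \<Rightarrow> (complex \<Rightarrow> complex) set" where
  "AN N h = {f. f holomorphic_on upper_half \<and>
      (\<exists>C. \<forall>p. \<forall>z\<in>upper_half. norm ((deriv ^^ p) f z) / (h ^ p * N p) \<le> C)}"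

definition AN_norm :: "(nat \<Rightarrow> real) \<Rightarrow> real \<Rightarrow> (complex \<Rightarrow> complex) \<Rightarrow> real" where
  "AN_norm N h f = Sup {norm ((deriv ^^ p) f z) / (h ^ p * N p) | p z. z \<in> upper_half}"

definition AN_roumieu :: "(nat \<Rightarrow> real) \<Rightarrow> (complex \<Rightarrow> complex) set" where
  "AN_roumieu N = (\<Union>h\<in>{0<..}. AN N h)"

definition laplace :: "(real \<Rightarrow> complex) \<Rightarrow> complex \<Rightarrow> complex" where
  "laplace \<phi> \<zeta> = (LINT x:{0<..}|lborel. \<phi> x * exp (\<i> * complex_of_real x * \<zeta>))"

end

theory Submission
  imports Defs "HOL-Real_Asymp.Real_Asymp"
begin

text \<open>
  The p-th derivative of the Laplace transform of phi is the Laplace transform of (ix)^p phi, so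
  on the upper half-plane it is bounded by the moment int x^p |phi(x)| dx. For phi in C_{M,h} the
  defining bounds with exponents p, p+1 and p+2 are the relevant ones on (0, h m_p],
  [h m_p, h m_{p+1}] and [h m_{p+1}, oo) respectively; integrating their minimum gives the moment
  bound ||phi|| h^{p+1} M_{p+1} (2 + log (m_{p+1} / m_p)), and (sm) bounds the logarithm by
  C0 H^{p+1} <= C0 H * H^p, which is the estimate in A_{M_{+1},Hh}.

  For injectivity, the Laplace transform of phi - psi vanishes on the imaginary axis, so all
  exponential moments int w(x) e^{-(n+1)x} dx of w(x) = (1 - e^{-x}) (phi - psi)(x) vanish. After
  the substitution u = e^{-x} these are the moments of a continuous function on [0,1], which
  therefore vanishes by the Weierstrass approximation theorem.
\<close>

section \<open>Integrals over the positive half-line\<close>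

lemma set_integrable_nonneg_has_integral:
  fixes f :: "real \<Rightarrow> real"
  assumes f: "(f has_integral I) S" and nonneg: "\<And>x. x \<in> S \<Longrightarrow> 0 \<le> f x"
    and meas: "set_borel_measurable lborel S f"
  shows "set_integrable lborel S f" and "(LINT x:S|lborel. f x) = I"
proof -
  have "f absolutely_integrable_on S"
    using f nonneg by (blast intro: nonnegative_absolutely_integrable_1)
  then show integrable: "set_integrable lborel S f"
    using meas integrable_completion
    unfolding absolutely_integrable_on_def set_integrable_def set_borel_measurable_def by metis
  show "(LINT x:S|lborel. f x) = I"
    using set_borel_integral_eq_integral(2)[OF integrable] f by (simp add: integral_unique)
qed

lemma set_borel_measurable_continuous_on_Ioi:
  fixes f :: "real \<Rightarrow> 'b::real_normed_vector"
  shows "continuous_on {a<..} f \<Longrightarrow> set_borel_measurable lborel {a<..} f"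
  using set_measurable_continuous_on[of "{a<..}" f]
  by (simp add: set_borel_measurable_def measurable_lborel1)

lemma set_borel_measurable_mult_continuous:
  fixes g :: "real \<Rightarrow> complex"
  assumes "set_borel_measurable lborel S \<phi>" and "continuous_on UNIV g"
  shows "set_borel_measurable lborel S (\<lambda>x. g x * \<phi> x)"
proof -
  have "g \<in> borel_measurable lborel"
    using assms(2) by (simp add: borel_measurable_continuous_onI measurable_lborel1)
  moreover have "(\<lambda>x. indicator S x *\<^sub>R (g x * \<phi> x)) = (\<lambda>x. g x * (indicator S x *\<^sub>R \<phi> x))"
    by (simp add: fun_eq_iff)
  ultimately show ?thesis
    using assms(1) unfolding set_borel_measurable_def by (metis borel_measurable_times)
qed

lemma set_integral_sum:
  fixes f :: "'i \<Rightarrow> 'a \<Rightarrow> 'b::{banach, second_countable_topology}"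
  assumes "finite I" and "\<And>i. i \<in> I \<Longrightarrow> set_integrable M A (f i)"
  shows "set_integrable M A (\<lambda>x. \<Sum>i\<in>I. f i x)"
    and "(LINT x:A|M. (\<Sum>i\<in>I. f i x)) = (\<Sum>i\<in>I. LINT x:A|M. f i x)"
proof -
  have eq: "(\<lambda>x. indicator A x *\<^sub>R (\<Sum>i\<in>I. f i x)) = (\<lambda>x. \<Sum>i\<in>I. indicator A x *\<^sub>R f i x)"
    by (simp add: scaleR_sum_right)
  show "set_integrable M A (\<lambda>x. \<Sum>i\<in>I. f i x)"
    using assms unfolding set_integrable_def eq by (intro Bochner_Integration.integrable_sum)
  show "(LINT x:A|M. (\<Sum>i\<in>I. f i x)) = (\<Sum>i\<in>I. LINT x:A|M. f i x)"
    using assms unfolding set_integrable_def set_lebesgue_integral_def eq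
    by (intro Bochner_Integration.integral_sum)
qed

lemma set_integral_bounded_linear:
  assumes "bounded_linear T" and "set_integrable M A f"
  shows "(LINT x:A|M. T (f x)) = T (LINT x:A|M. f x)"
  using assms integral_bounded_linear[of T M "\<lambda>x. indicator A x *\<^sub>R f x"]
    linear.scaleR[OF bounded_linear.linear[OF assms(1)]]
  by (simp add: set_lebesgue_integral_def set_integrable_def)

lemma continuous_nonneg_set_integral_eq_0:
  fixes f :: "real \<Rightarrow> real"
  assumes cont: "continuous_on {0<..} f" and nonneg: "\<And>x. 0 < x \<Longrightarrow> 0 \<le> f x"
    and int: "set_integrable lborel {0<..} f" and zero: "(LINT x:{0<..}|lborel. f x) = 0"
    and x0: "0 < x0"
  shows "f x0 = 0"
proof -
  let ?B = "{x0 / 2 .. 2 * x0}"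
  have B: "?B \<subseteq> {0<..}"
    using x0 by auto
  have "AE x in lborel. indicator {0<..} x *\<^sub>R f x = 0"
    using int zero nonneg unfolding set_integrable_def set_lebesgue_integral_def
    by (subst integral_nonneg_eq_0_iff_AE[symmetric]) (auto simp: indicator_def)
  then have ae: "AE x \<in> {x0 / 2 <..< 2 * x0} in lebesgue. x \<in> {x \<in> ?B. f x = 0}"
    by (rule AE_completion[THEN eventually_mono]) (use B in \<open>auto simp: indicator_def\<close>)
  have closed: "closed {x \<in> ?B. f x = 0}"
    by (intro continuous_closed_preimage_constant continuous_on_subset[OF cont B]) simp
  have "x0 \<in> {x \<in> ?B. f x = 0}"
    using x0 by (intro mem_closed_if_AE_lebesgue_open[OF open_greaterThanLessThan closed ae]) auto
  then show ?thesis by simp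
qed

definition moment_majorant :: "real \<Rightarrow> real \<Rightarrow> real \<Rightarrow> real" where
  "moment_majorant b a x = min (1 / b) (min (1 / x) (a / x\<^sup>2))"

lemma moment_majorant_nonneg: "0 < b \<Longrightarrow> 0 < a \<Longrightarrow> 0 < x \<Longrightarrow> 0 \<le> moment_majorant b a x"
  by (simp add: moment_majorant_def)

lemma moment_majorant_eq_left:
  assumes "0 < x" and "x \<le> b" and "b \<le> a"
  shows "moment_majorant b a x = 1 / b"
proof -
  have "x\<^sup>2 \<le> b * a"
    using mult_mono[OF assms(2) order_trans[OF assms(2,3)]] assms(1,2) by (simp add: power2_eq_square)
  then have "1 / b \<le> a / x\<^sup>2"
    using assms by (simp add: field_simps)
  moreover have "1 / b \<le> 1 / x"
    using assms by (simp add: frac_le)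
  ultimately show ?thesis
    by (simp add: moment_majorant_def)
qed

lemma moment_majorant_eq_middle:
  assumes "0 < b" and "b \<le> x" and "x \<le> a"
  shows "moment_majorant b a x = 1 / x"
  using assms by (auto simp: moment_majorant_def power2_eq_square field_simps)

lemma moment_majorant_eq_right:
  assumes "0 < b" and "b \<le> a" and "a \<le> x"
  shows "moment_majorant b a x = a / x\<^sup>2"
proof -
  have "a / x\<^sup>2 \<le> x / x\<^sup>2"
    using assms by (simp add: divide_right_mono)
  also have "\<dots> = 1 / x"
    by (simp add: power2_eq_square)
  finally have "a / x\<^sup>2 \<le> 1 / x" .
  moreover have "1 / x \<le> 1 / b"
    using assms by (simp add: frac_le)
  ultimately show ?thesis
    by (simp add: moment_majorant_def)
qed

lemma moment_majorant_has_integral: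
  assumes b: "0 < b" and ba: "b \<le> a"
  shows "(moment_majorant b a has_integral (2 + ln a - ln b)) {0<..}"
proof -
  have "(moment_majorant b a has_integral 1) {0..b}"
  proof (rule has_integral_spike[of "{0}"])
    show "((\<lambda>x. 1 / b) has_integral 1) {0..b}"
      using has_integral_const_real[of "1 / b" 0 b] b by simp
  qed (use ba moment_majorant_eq_left in auto)
  moreover have "(moment_majorant b a has_integral (ln a - ln b)) {b..a}"
  proof (rule has_integral_eq[rotated])
    show "((\<lambda>x. 1 / x) has_integral (ln a - ln b)) {b..a}"
      using ba b by (intro fundamental_theorem_of_calculus)
        (auto intro!: derivative_eq_intros simp: field_simps
          simp flip: has_real_derivative_iff_has_vector_derivative)
  qed (use b moment_majorant_eq_middle in auto)
  moreover have "(moment_majorant b a has_integral 1) {a..}"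
  proof (rule has_integral_eq[rotated])
    show "((\<lambda>x. a * (1 / x\<^sup>2)) has_integral 1) {a..}"
      using has_integral_mult_right[OF has_integral_inverse_power_to_inf[of 2 a], of a] b ba by simp
  qed (use b ba moment_majorant_eq_right in auto)
  ultimately have "(moment_majorant b a has_integral (1 + (ln a - ln b) + 1)) ({0..b} \<union> {b..a} \<union> {a..})"
  proof (intro has_integral_Un)
    show "negligible (({0..b} \<union> {b..a}) \<inter> {a..})"
      by (rule negligible_subset[of "{a}"]) (use ba in auto)
    show "negligible ({0..b} \<inter> {b..a})"
      by (rule negligible_subset[of "{b}"]) auto
  qed
  moreover have "{0..b} \<union> {b..a} \<union> {a..} = {0..}"
    using b ba by auto
  moreover have "(moment_majorant b a has_integral (2 + ln a - ln b)) {0<..} \<longleftrightarrow>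
      (moment_majorant b a has_integral (2 + ln a - ln b)) {0..}"
  proof (rule has_integral_spike_set_eq)
    show "negligible {x \<in> {0<..} - {0..}. moment_majorant b a x \<noteq> 0}"
      by (rule negligible_subset[of "{}"]) auto
    show "negligible {x \<in> {0..} - {0<..}. moment_majorant b a x \<noteq> 0}"
      by (rule negligible_subset[of "{0}"]) auto
  qed
  ultimately show ?thesis
    by (simp add: algebra_simps)
qed

lemma moment_majorant_set_integral:
  assumes "0 < b" and "b \<le> a"
  shows "set_integrable lborel {0<..} (moment_majorant b a)"
    and "(LINT x:{0<..}|lborel. moment_majorant b a x) = 2 + ln a - ln b"
proof -
  have "0 \<le> moment_majorant b a x" if "x \<in> {0<..}" for x
    using that assms by (intro moment_majorant_nonneg) auto
  moreover have "continuous_on {0<..} (moment_majorant b a)"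
    unfolding moment_majorant_def by (intro continuous_intros) auto
  then have "set_borel_measurable lborel {0<..} (moment_majorant b a)"
    by (rule set_borel_measurable_continuous_on_Ioi)
  ultimately show "set_integrable lborel {0<..} (moment_majorant b a)"
    and "(LINT x:{0<..}|lborel. moment_majorant b a x) = 2 + ln a - ln b"
    using set_integrable_nonneg_has_integral[OF moment_majorant_has_integral[OF assms]] by auto
qed

lemma set_integrable_Ioi_inverse_square_bound:
  fixes f :: "real \<Rightarrow> 'a::{banach, second_countable_topology}"
  assumes cont: "continuous_on {0<..} f"
    and bound: "\<And>x. 0 < x \<Longrightarrow> norm (f x) \<le> C"
    and decay: "\<And>x. 0 < x \<Longrightarrow> norm (f x) \<le> C / x\<^sup>2"
  shows "set_integrable lborel {0<..} f"
proof (rule set_integrable_bound[OF _ set_borel_measurable_continuous_on_Ioi[OF cont]])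
  show "set_integrable lborel {0<..} (\<lambda>x. C * moment_majorant 1 1 x)"
    using moment_majorant_set_integral(1)[of 1 1] by simp
  have "0 \<le> C"
    using order_trans[OF norm_ge_zero bound[of 1]] by simp
  have "norm (f x) \<le> C * moment_majorant 1 1 x" if x: "0 < x" for x
  proof (cases "x \<le> 1")
    case True
    then have "C \<le> C / x" "C \<le> C / x\<^sup>2"
      using x \<open>0 \<le> C\<close> by (auto simp: field_simps power2_eq_square intro!: mult_left_le mult_le_one)
    then show ?thesis
      using bound[OF x] \<open>0 \<le> C\<close> by (simp add: moment_majorant_def min_mult_distrib_left)
  next
    case False
    then have "C \<le> C * x"
      using mult_left_mono[of 1 x C] \<open>0 \<le> C\<close> by simp
    then have "C / x\<^sup>2 \<le> C / x" "C / x \<le> C"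
      using False by (auto simp: field_simps power2_eq_square)
    then show ?thesis
      using decay[OF x] \<open>0 \<le> C\<close> by (simp add: moment_majorant_def min_mult_distrib_left)
  qed
  then show "AE x in lborel. x \<in> {0<..} \<longrightarrow> norm (f x) \<le> norm (C * moment_majorant 1 1 x)"
    by (intro AE_I2) (auto intro: order_trans[OF _ abs_ge_self])
qed

lemma set_integrable_mult_exp_neg:
  fixes f :: "real \<Rightarrow> 'a::{real_normed_div_algebra, banach, second_countable_topology}"
  assumes cont: "continuous_on {0<..} f"
    and bounded: "\<And>x. 0 < x \<Longrightarrow> norm (f x) \<le> C"
    and at_top: "\<And>x. 0 < x \<Longrightarrow> norm (f x) \<le> C / x\<^sup>2"
    and t: "0 \<le> t"
  shows "set_integrable lborel {0<..} (\<lambda>x. f x * of_real (exp (- t * x)))"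
proof (rule set_integrable_Ioi_inverse_square_bound[where C = C])
  show "continuous_on {0<..} (\<lambda>x. f x * of_real (exp (- t * x)))"
    by (intro continuous_intros cont)
  fix x :: real
  assume x: "0 < x"
  have "norm (f x * of_real (exp (- t * x))) \<le> norm (f x)"
    using t x by (simp add: norm_mult mult_left_le mult_nonneg_nonneg)
  then show "norm (f x * of_real (exp (- t * x))) \<le> C"
    and "norm (f x * of_real (exp (- t * x))) \<le> C / x\<^sup>2"
    using bounded[OF x] at_top[OF x] by linarith+
qed

section \<open>Laplace transforms of functions with finite moments\<close>

lemma norm_exp_diff_linear_le:
  fixes a b :: complex
  assumes a: "Re a \<le> 0" and b: "Re b \<le> 0"
  shows "norm (exp a - exp b - (a - b) * exp b) \<le> (norm (a - b))\<^sup>2"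
proof -
  define S where "S = {z::complex. Re z \<le> 0}"
  have "convex S" unfolding S_def by (rule convex_halfspace_Re_le)
  have exp_lipschitz: "norm (exp u - exp v) \<le> 1 * norm (u - v)" if "u \<in> S" "v \<in> S" for u v
  proof (rule field_differentiable_bound[OF \<open>convex S\<close> _ _ that])
    show "(exp has_field_derivative exp z) (at z within S)" for z
      by (rule has_field_derivative_at_within[OF DERIV_exp])
    show "norm (exp z) \<le> 1" if "z \<in> S" for z
      using that by (simp add: S_def norm_exp_eq_Re)
  qed
  have "a \<in> S" "b \<in> S" using a b by (auto simp: S_def)
  have segment: "closed_segment b a \<subseteq> S"
    using \<open>b \<in> S\<close> \<open>a \<in> S\<close> \<open>convex S\<close> by (rule closed_segment_subset)
  have "norm ((exp a - a * exp b) - (exp b - b * exp b)) \<le> norm (a - b) * norm (a - b)"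
  proof (rule field_differentiable_bound[OF convex_closed_segment, of b a
        "\<lambda>u. exp u - u * exp b" "\<lambda>u. exp u - exp b"])
    show "((\<lambda>u. exp u - u * exp b) has_field_derivative exp u - exp b) (at u within closed_segment b a)"
      for u by (auto intro!: derivative_eq_intros)
    show "norm (exp u - exp b) \<le> norm (a - b)" if u: "u \<in> closed_segment b a" for u
    proof -
      have "norm (exp u - exp b) \<le> 1 * norm (u - b)"
        using exp_lipschitz segment u \<open>b \<in> S\<close> by blast
      also have "\<dots> \<le> norm (a - b)"
        using dist_in_closed_segment[OF u] by (simp add: dist_norm norm_minus_commute)
      finally show ?thesis .
    qed
  qed auto
  then show ?thesis by (simp add: algebra_simps power2_eq_square)
qed

lemma norm_exp_imaginary_le_1:
  assumes "0 \<le> x" and "0 \<le> Im z"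
  shows "norm (exp (\<i> * of_real x * z)) \<le> 1"
  using assms by (simp add: norm_exp_eq_Re mult_nonneg_nonneg)

definition finite_moments :: "(real \<Rightarrow> complex) \<Rightarrow> bool" where
  "finite_moments \<phi> \<longleftrightarrow> set_borel_measurable lborel {0<..} \<phi> \<and>
     (\<forall>p. set_integrable lborel {0<..} (\<lambda>x. x ^ p * norm (\<phi> x)))"

lemma finite_moments_set_integrable:
  "finite_moments \<phi> \<Longrightarrow> set_integrable lborel {0<..} (\<lambda>x. x ^ p * norm (\<phi> x))"
  by (simp add: finite_moments_def)

lemma finite_moments_mult_power:
  assumes "finite_moments \<phi>"
  shows "finite_moments (\<lambda>x. (\<i> * of_real x) ^ q * \<phi> x)"
  unfolding finite_moments_def
proof (intro conjI allI)
  show "set_borel_measurable lborel {0<..} (\<lambda>x. (\<i> * of_real x) ^ q * \<phi> x)"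
    using assms unfolding finite_moments_def
    by (intro set_borel_measurable_mult_continuous continuous_intros) auto
  show "set_integrable lborel {0<..} (\<lambda>x. x ^ p * norm ((\<i> * of_real x) ^ q * \<phi> x))" for p
  proof (rule set_integrable_cong[THEN iffD1, OF refl refl])
    show "x ^ (p + q) * norm (\<phi> x) = x ^ p * norm ((\<i> * of_real x) ^ q * \<phi> x)" if "x \<in> {0<..}" for x
      using that by (simp add: norm_mult norm_power power_add)
  qed (use assms in \<open>unfold finite_moments_def, blast\<close>)
qed

lemma laplace_integrand_set_integrable:
  assumes moments: "finite_moments \<phi>" and "0 \<le> Im z"
  shows "set_integrable lborel {0<..} (\<lambda>x. \<phi> x * exp (\<i> * of_real x * z))"
proof (rule set_integrable_bound[OF finite_moments_set_integrable[OF moments, of 0]])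
  show "set_borel_measurable lborel {0<..} (\<lambda>x. \<phi> x * exp (\<i> * of_real x * z))"
    using set_borel_measurable_mult_continuous[of "{0<..}" \<phi> "\<lambda>x. exp (\<i> * of_real x * z)"] moments
    by (simp add: finite_moments_def mult.commute continuous_intros)
  show "AE x in lborel. x \<in> {0<..} \<longrightarrow>
      norm (\<phi> x * exp (\<i> * of_real x * z)) \<le> norm (x ^ 0 * norm (\<phi> x))"
    using norm_exp_imaginary_le_1[OF _ \<open>0 \<le> Im z\<close>]
    by (intro AE_I2) (simp add: norm_mult mult_left_le)
qed

lemma norm_laplace_le:
  assumes moments: "finite_moments \<phi>" and z: "0 \<le> Im z"
  shows "norm (laplace \<phi> z) \<le> (LINT x:{0<..}|lborel. norm (\<phi> x))"
proof -
  have "norm (laplace \<phi> z) \<le> (LINT x:{0<..}|lborel. norm (\<phi> x * exp (\<i> * of_real x * z)))"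
    unfolding laplace_def
    by (rule set_integral_norm_bound[OF laplace_integrand_set_integrable[OF moments z]])
  also have "\<dots> \<le> (LINT x:{0<..}|lborel. norm (\<phi> x))"
  proof (rule set_integral_mono)
    show "set_integrable lborel {0<..} (\<lambda>x. norm (\<phi> x * exp (\<i> * of_real x * z)))"
      by (intro set_integrable_norm laplace_integrand_set_integrable moments z)
    show "set_integrable lborel {0<..} (\<lambda>x. norm (\<phi> x))"
      using finite_moments_set_integrable[OF moments, of 0] by simp
  qed (use norm_exp_imaginary_le_1[OF _ z] in \<open>auto simp: norm_mult mult_left_le\<close>)
  finally show ?thesis .
qed

lemma norm_laplace_integrand_taylor_le:
  fixes c :: complex
  assumes x: "0 \<le> x" and z: "0 \<le> Im z" and w: "0 \<le> Im w"
  shows "norm (c * exp (\<i> * of_real x * w) - c * exp (\<i> * of_real x * z)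
      - (w - z) * (\<i> * of_real x * c * exp (\<i> * of_real x * z)))
    \<le> x\<^sup>2 * norm c * (norm (w - z))\<^sup>2"
proof -
  let ?a = "\<i> * of_real x * w" and ?b = "\<i> * of_real x * z"
  have "c * exp ?a - c * exp ?b - (w - z) * (\<i> * of_real x * c * exp ?b)
      = c * (exp ?a - exp ?b - (?a - ?b) * exp ?b)"
    by (simp add: algebra_simps)
  then have "norm (c * exp ?a - c * exp ?b - (w - z) * (\<i> * of_real x * c * exp ?b))
      = norm c * norm (exp ?a - exp ?b - (?a - ?b) * exp ?b)"
    by (simp only: norm_mult)
  also have "\<dots> \<le> norm c * (norm (?a - ?b))\<^sup>2"
    using x z w by (intro mult_left_mono norm_exp_diff_linear_le) (auto simp: mult_nonneg_nonneg)
  also have "norm (?a - ?b) = x * norm (w - z)"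
    using x by (simp add: norm_mult flip: right_diff_distrib)
  also have "norm c * (x * norm (w - z))\<^sup>2 = x\<^sup>2 * norm c * (norm (w - z))\<^sup>2"
    by (simp add: power_mult_distrib)
  finally show ?thesis .
qed

lemma laplace_taylor_bound:
  assumes moments: "finite_moments \<phi>" and z: "0 \<le> Im z" and w: "0 \<le> Im w"
  shows "norm (laplace \<phi> w - laplace \<phi> z - (w - z) * laplace (\<lambda>x. \<i> * of_real x * \<phi> x) z)
           \<le> (LINT x:{0<..}|lborel. x\<^sup>2 * norm (\<phi> x)) * (norm (w - z))\<^sup>2"
proof -
  let ?e = "\<lambda>u x. exp (\<i> * of_real x * u)"
  let ?r = "\<lambda>x. \<phi> x * ?e w x - \<phi> x * ?e z x - (w - z) * (\<i> * of_real x * \<phi> x * ?e z x)"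
  have moments': "finite_moments (\<lambda>x. \<i> * of_real x * \<phi> x)"
    using finite_moments_mult_power[OF moments, of 1] by simp
  note int_w = laplace_integrand_set_integrable[OF moments w]
    and int_z = laplace_integrand_set_integrable[OF moments z]
    and int_d = set_integrable_mult_right[OF laplace_integrand_set_integrable[OF moments' z], of "w - z"]
  have r: "set_integrable lborel {0<..} ?r"
    by (intro set_integral_diff(1) int_w int_z int_d)
  have remainder: "laplace \<phi> w - laplace \<phi> z - (w - z) * laplace (\<lambda>x. \<i> * of_real x * \<phi> x) z
      = (LINT x:{0<..}|lborel. ?r x)"
    unfolding laplace_def
    by (simp only: set_integral_diff(2)[OF set_integral_diff(1)[OF int_w int_z] int_d]
        set_integral_diff(2)[OF int_w int_z] set_integral_mult_right)
  have "norm (LINT x:{0<..}|lborel. ?r x) \<le> (LINT x:{0<..}|lborel. norm (?r x))"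
    by (rule set_integral_norm_bound[OF r])
  also have "\<dots> \<le> (LINT x:{0<..}|lborel. x\<^sup>2 * norm (\<phi> x) * (norm (w - z))\<^sup>2)"
    using set_integrable_norm[OF r] finite_moments_set_integrable[OF moments, of 2]
      norm_laplace_integrand_taylor_le[OF _ z w]
    by (intro set_integral_mono) auto
  finally show ?thesis
    unfolding remainder by simp
qed

lemma open_upper_half: "open upper_half"
  unfolding upper_half_def by (rule open_halfspace_Im_gt)

lemma laplace_has_field_derivative:
  assumes moments: "finite_moments \<phi>" and z: "0 < Im z"
  shows "(laplace \<phi> has_field_derivative laplace (\<lambda>x. \<i> * of_real x * \<phi> x) z) (at z)"
proof -
  define D where "D = laplace (\<lambda>x. \<i> * of_real x * \<phi> x) z"
  define K where "K = (LINT x:{0<..}|lborel. x\<^sup>2 * norm (\<phi> x))"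
  have "eventually (\<lambda>w. w \<in> upper_half) (at z)"
    using z by (intro eventually_at_in_open' open_upper_half) (simp add: upper_half_def)
  moreover have "eventually (\<lambda>w. w \<noteq> z) (at z)"
    by (rule eventually_neq_at_within)
  ultimately have "eventually (\<lambda>w. norm ((laplace \<phi> w - laplace \<phi> z) / (w - z) - D) \<le> K * norm (w - z)) (at z)"
  proof eventually_elim
    case (elim w)
    then have w: "w \<in> upper_half" by simp
    from elim have "(laplace \<phi> w - laplace \<phi> z) / (w - z) - D
        = (laplace \<phi> w - laplace \<phi> z - (w - z) * D) / (w - z)"
      by (simp add: field_simps)
    also have "norm \<dots> \<le> K * (norm (w - z))\<^sup>2 / norm (w - z)"
      unfolding norm_divide D_def K_def
      using w z by (intro divide_right_mono laplace_taylor_bound moments) (auto simp: upper_half_def)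
    also have "\<dots> = K * norm (w - z)"
      by (simp add: power2_eq_square)
    finally show "norm ((laplace \<phi> w - laplace \<phi> z) / (w - z) - D) \<le> K * norm (w - z)" .
  qed
  moreover have "((\<lambda>w. K * norm (w - z)) \<longlongrightarrow> 0) (at z)"
    by (intro tendsto_eq_intros) auto
  ultimately have "((\<lambda>w. (laplace \<phi> w - laplace \<phi> z) / (w - z) - D) \<longlongrightarrow> 0) (at z)"
    by (rule Lim_null_comparison)
  then show ?thesis
    unfolding D_def has_field_derivative_iff by (simp add: LIM_zero_iff)
qed

lemma laplace_holomorphic:
  assumes "finite_moments \<phi>"
  shows "laplace \<phi> holomorphic_on upper_half"
  using laplace_has_field_derivative[OF assms]
  by (auto simp: holomorphic_on_def field_differentiable_def upper_half_def
      intro: has_field_derivative_at_within)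

lemma higher_deriv_laplace:
  assumes moments: "finite_moments \<phi>" and z: "z \<in> upper_half"
  shows "(deriv ^^ p) (laplace \<phi>) z = laplace (\<lambda>x. (\<i> * of_real x) ^ p * \<phi> x) z"
  using z
proof (induction p arbitrary: z)
  case 0
  then show ?case by simp
next
  case (Suc p)
  have "eventually (\<lambda>w. w \<in> upper_half) (nhds z)"
    by (intro eventually_nhds_in_open open_upper_half Suc.prems)
  then have "eventually (\<lambda>w. (deriv ^^ p) (laplace \<phi>) w = laplace (\<lambda>x. (\<i> * of_real x) ^ p * \<phi> x) w) (nhds z)"
    by (rule eventually_mono) (rule Suc.IH)
  then have "(deriv ^^ Suc p) (laplace \<phi>) z = deriv (laplace (\<lambda>x. (\<i> * of_real x) ^ p * \<phi> x)) z"
    by (simp add: deriv_cong_ev)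
  also have "\<dots> = laplace (\<lambda>x. \<i> * of_real x * ((\<i> * of_real x) ^ p * \<phi> x)) z"
    using Suc.prems
    by (intro DERIV_imp_deriv laplace_has_field_derivative finite_moments_mult_power moments)
      (simp add: upper_half_def)
  finally show ?case
    by (simp add: mult.assoc)
qed

lemma norm_higher_deriv_laplace_le:
  assumes moments: "finite_moments \<phi>" and z: "z \<in> upper_half"
  shows "norm ((deriv ^^ p) (laplace \<phi>) z) \<le> (LINT x:{0<..}|lborel. x ^ p * norm (\<phi> x))"
proof -
  have "norm ((deriv ^^ p) (laplace \<phi>) z)
      \<le> (LINT x:{0<..}|lborel. norm ((\<i> * of_real x) ^ p * \<phi> x))"
    unfolding higher_deriv_laplace[OF moments z]
    using z by (intro norm_laplace_le finite_moments_mult_power moments) (simp add: upper_half_def)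
  also have "\<dots> = (LINT x:{0<..}|lborel. x ^ p * norm (\<phi> x))"
    by (rule set_lebesgue_integral_cong) (auto simp: norm_mult norm_power)
  finally show ?thesis .
qed

lemma laplace_diff:
  assumes "finite_moments \<phi>" and "finite_moments \<psi>" and "0 \<le> Im z"
  shows "laplace (\<lambda>x. \<phi> x - \<psi> x) z = laplace \<phi> z - laplace \<psi> z"
  unfolding laplace_def
  using set_integral_diff(2)[OF laplace_integrand_set_integrable[OF assms(1,3)]
      laplace_integrand_set_integrable[OF assms(2,3)]]
  by (simp add: left_diff_distrib)

lemma laplace_imaginary_axis:
  "laplace \<phi> (\<i> * of_real t) = (LINT x:{0<..}|lborel. \<phi> x * of_real (exp (- t * x)))"
proof -
  have "\<i> * of_real x * (\<i> * of_real t) = of_real (- t * x)" for x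
    by (simp add: algebra_simps)
  then show ?thesis
    unfolding laplace_def by (simp only: exp_of_real)
qed

section \<open>Vanishing exponential moments\<close>

lemma continuous_on_compose_neg_ln_extension:
  fixes w :: "real \<Rightarrow> real"
  assumes cont: "continuous_on {0<..} w"
    and at_0: "\<And>x. 0 < x \<Longrightarrow> \<bar>w x\<bar> \<le> C * x"
    and at_top: "\<And>x. 0 < x \<Longrightarrow> \<bar>w x\<bar> \<le> C / x\<^sup>2"
  shows "continuous_on {0..1} (\<lambda>u. if 0 < u \<and> u < 1 then w (- ln u) else 0)"
    (is "continuous_on _ ?G")
proof -
  have "continuous_on {0<..<1} (\<lambda>u. w (- ln u))"
    by (rule continuous_on_compose2[OF cont]) (auto intro!: continuous_intros)
  then have interior: "continuous_on {0<..<1} ?G"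
    by (rule continuous_on_cong[THEN iffD1, OF refl, rotated]) auto
  have at_left_0: "eventually (\<lambda>u. 0 < u \<and> u < (1::real)) (at_right 0)"
    and at_right_1: "eventually (\<lambda>u. 0 < u \<and> u < (1::real)) (at_left 1)"
    using eventually_at_right_real[of 0 1] eventually_at_left_real[of 0 1] by simp_all
  have lim_0: "(?G \<longlongrightarrow> 0) (at_right 0)"
  proof (rule Lim_null_comparison)
    show "eventually (\<lambda>u. norm (?G u) \<le> C / (ln u)\<^sup>2) (at_right 0)"
      using at_left_0
    proof eventually_elim
      case (elim u)
      then show ?case using at_top[of "- ln u"] by simp
    qed
    show "((\<lambda>u. C / (ln u)\<^sup>2) \<longlongrightarrow> 0) (at_right (0::real))"
      by real_asymp
  qed
  have lim_1: "(?G \<longlongrightarrow> 0) (at_left 1)"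
  proof (rule Lim_null_comparison)
    show "eventually (\<lambda>u. norm (?G u) \<le> C * - ln u) (at_left 1)"
      using at_right_1
    proof eventually_elim
      case (elim u)
      then show ?case using at_0[of "- ln u"] by simp
    qed
    show "((\<lambda>u. C * - ln u) \<longlongrightarrow> 0) (at_left (1::real))"
      by real_asymp
  qed
  show ?thesis
  proof (rule continuous_on_IccI)
    show "?G \<midarrow>u\<rightarrow> ?G u" if "0 < u" "u < 1" for u
      using interior that by (simp add: continuous_on_eq_continuous_at isCont_def)
  qed (use lim_0 lim_1 in simp_all)
qed

lemma polynomial_exp_moments_eq_0:
  fixes w :: "real \<Rightarrow> real"
  assumes int: "\<And>n. set_integrable lborel {0<..} (\<lambda>x. w x * exp (- (real n + 1) * x))"
    and mom: "\<And>n. (LINT x:{0<..}|lborel. w x * exp (- (real n + 1) * x)) = 0"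
    and g: "real_polynomial_function g"
  shows "set_integrable lborel {0<..} (\<lambda>x. w x * g (exp (- x)) * exp (- x))"
    and "(LINT x:{0<..}|lborel. w x * g (exp (- x)) * exp (- x)) = 0"
proof -
  obtain a n where g_eq: "g = (\<lambda>u. \<Sum>i\<le>n. a i * u ^ i)"
    using g real_polynomial_function_iff_sum by blast
  have "exp (- (real i + 1) * x) = exp (- x) ^ i * exp (- x)" for i x
    by (simp add: algebra_simps flip: exp_of_nat_mult exp_add)
  then have expand: "w x * g (exp (- x)) * exp (- x) = (\<Sum>i\<le>n. a i * (w x * exp (- (real i + 1) * x)))" for x
    by (simp add: g_eq sum_distrib_left sum_distrib_right algebra_simps)
  show "set_integrable lborel {0<..} (\<lambda>x. w x * g (exp (- x)) * exp (- x))"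
    unfolding expand using int by (intro set_integral_sum(1)) auto
  show "(LINT x:{0<..}|lborel. w x * g (exp (- x)) * exp (- x)) = 0"
    unfolding expand
    by (simp only: set_integral_sum(2)[OF finite_atMost set_integrable_mult_right[OF int]]
        set_integral_mult_right mom) simp
qed

lemma weierstrass_exp_moments_square_le:
  fixes w :: "real \<Rightarrow> real"
  assumes G: "continuous_on {0..1} (\<lambda>u. if 0 < u \<and> u < 1 then w (- ln u) else 0)"
    and int_exp: "\<And>n. set_integrable lborel {0<..} (\<lambda>x. w x * exp (- (real n + 1) * x))"
    and mom: "\<And>n. (LINT x:{0<..}|lborel. w x * exp (- (real n + 1) * x)) = 0"
    and int_sq: "set_integrable lborel {0<..} (\<lambda>x. w x * w x * exp (- x))"
    and int_abs: "set_integrable lborel {0<..} (\<lambda>x. \<bar>w x\<bar>)"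
    and e: "0 < e"
  shows "(LINT x:{0<..}|lborel. w x * w x * exp (- x)) \<le> e * (LINT x:{0<..}|lborel. \<bar>w x\<bar>)"
proof -
  obtain g where "polynomial_function g"
    and g: "\<forall>u\<in>{0..1}. norm ((if 0 < u \<and> u < 1 then w (- ln u) else 0) - g u) < e"
    using Stone_Weierstrass_polynomial_function[OF compact_Icc G e] by blast
  then have "real_polynomial_function g"
    by (simp add: real_polynomial_function_eq)
  note poly = polynomial_exp_moments_eq_0[OF int_exp mom this]
  have "(LINT x:{0<..}|lborel. w x * w x * exp (- x))
      = (LINT x:{0<..}|lborel. w x * w x * exp (- x) - w x * g (exp (- x)) * exp (- x))"
    using int_sq poly by simp
  also have "\<dots> \<le> (LINT x:{0<..}|lborel. e * \<bar>w x\<bar>)"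
  proof (rule set_integral_mono)
    show "set_integrable lborel {0<..}
        (\<lambda>x. w x * w x * exp (- x) - w x * g (exp (- x)) * exp (- x))"
      by (rule set_integral_diff(1)[OF int_sq poly(1)])
    show "set_integrable lborel {0<..} (\<lambda>x. e * \<bar>w x\<bar>)"
      using int_abs by simp
    fix x :: real
    assume "x \<in> {0<..}"
    then have x: "0 < x" by simp
    have "exp (- x) \<in> {0..1}"
      using x by simp
    then have "\<bar>w x - g (exp (- x))\<bar> < e"
      using g x by fastforce
    have "w x * w x * exp (- x) - w x * g (exp (- x)) * exp (- x)
        = w x * (w x - g (exp (- x))) * exp (- 1 * x)"
      by (simp add: algebra_simps)
    also have "\<dots> \<le> \<bar>w x * (w x - g (exp (- x))) * exp (- 1 * x)\<bar>"
      by (rule abs_ge_self)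
    also have "\<dots> \<le> \<bar>w x * (w x - g (exp (- x)))\<bar>"
      using x by (simp add: abs_mult mult_left_le)
    also have "\<dots> \<le> e * \<bar>w x\<bar>"
      using mult_left_mono[OF less_imp_le[OF \<open>\<bar>w x - g (exp (- x))\<bar> < e\<close>] abs_ge_zero[of "w x"]]
      by (simp add: abs_mult mult.commute)
    finally show "w x * w x * exp (- x) - w x * g (exp (- x)) * exp (- x) \<le> e * \<bar>w x\<bar>" .
  qed
  finally show ?thesis
    by simp
qed

lemma exp_moments_eq_0_imp_eq_0:
  fixes w :: "real \<Rightarrow> real"
  assumes cont: "continuous_on {0<..} w"
    and at_0: "\<And>x. 0 < x \<Longrightarrow> \<bar>w x\<bar> \<le> C * x"
    and bounded: "\<And>x. 0 < x \<Longrightarrow> \<bar>w x\<bar> \<le> C"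
    and at_top: "\<And>x. 0 < x \<Longrightarrow> \<bar>w x\<bar> \<le> C / x\<^sup>2"
    and mom: "\<And>n. (LINT x:{0<..}|lborel. w x * exp (- (real n + 1) * x)) = 0"
    and x0: "0 < x0"
  shows "w x0 = 0"
proof -
  have int_abs: "set_integrable lborel {0<..} (\<lambda>x. \<bar>w x\<bar>)"
    using bounded at_top
    by (intro set_integrable_Ioi_inverse_square_bound[where C = C] continuous_intros cont) auto
  have int_exp: "set_integrable lborel {0<..} (\<lambda>x. w x * exp (- (real n + 1) * x))" for n
    using set_integrable_mult_exp_neg[of w C "real n + 1"] cont bounded at_top by simp
  have "\<bar>w x * w x\<bar> \<le> C * C" "\<bar>w x * w x\<bar> \<le> C * C / x\<^sup>2" if "0 < x" for x
    using mult_mono[OF bounded[OF that] at_top[OF that]] mult_mono[OF bounded[OF that] bounded[OF that]]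
      order_trans[OF abs_ge_zero bounded[OF that]]
    by (simp_all add: abs_mult)
  then have int_sq: "set_integrable lborel {0<..} (\<lambda>x. w x * w x * exp (- x))"
    using set_integrable_mult_exp_neg[of "\<lambda>x. w x * w x" "C * C" 1] cont by (simp add: continuous_intros)
  define I J where "I = (LINT x:{0<..}|lborel. w x * w x * exp (- x))"
    and "J = (LINT x:{0<..}|lborel. \<bar>w x\<bar>)"
  have "0 \<le> J"
    unfolding J_def set_lebesgue_integral_def by (intro Bochner_Integration.integral_nonneg) simp
  have approx: "I \<le> e * J" if "0 < e" for e
    unfolding I_def J_def
    by (rule weierstrass_exp_moments_square_le[OF continuous_on_compose_neg_ln_extension[OF cont at_0 at_top]
          int_exp mom int_sq int_abs that])
  have "I \<le> 0"
  proof (rule field_le_epsilon)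
    fix e :: real
    assume "0 < e"
    have "I \<le> e / (J + 1) * J"
      using \<open>0 \<le> J\<close> \<open>0 < e\<close> by (intro approx) simp
    also have "\<dots> \<le> e"
      using \<open>0 \<le> J\<close> \<open>0 < e\<close> mult_right_le_one_le[of e "J / (J + 1)"] by simp
    finally show "I \<le> 0 + e" by simp
  qed
  moreover have "0 \<le> I"
    unfolding I_def set_lebesgue_integral_def
    by (intro Bochner_Integration.integral_nonneg) (simp add: indicator_def)
  ultimately have "(LINT x:{0<..}|lborel. w x * w x * exp (- x)) = 0"
    unfolding I_def by simp
  then have "w x0 * w x0 * exp (- x0) = 0"
    using continuous_nonneg_set_integral_eq_0[where f = "\<lambda>x. w x * w x * exp (- x)", OF _ _ int_sq _ x0]
    by (simp add: continuous_intros cont)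
  then show ?thesis by simp
qed

lemma exp_moments_eq_0_imp_eq_0_complex:
  fixes v :: "real \<Rightarrow> complex"
  assumes cont: "continuous_on {0<..} v"
    and at_0: "\<And>x. 0 < x \<Longrightarrow> norm (v x) \<le> C * x"
    and bounded: "\<And>x. 0 < x \<Longrightarrow> norm (v x) \<le> C"
    and at_top: "\<And>x. 0 < x \<Longrightarrow> norm (v x) \<le> C / x\<^sup>2"
    and mom: "\<And>n. (LINT x:{0<..}|lborel. v x * of_real (exp (- (real n + 1) * x))) = 0"
    and x0: "0 < x0"
  shows "v x0 = 0"
proof -
  have component: "T (v x0) = 0" if T: "bounded_linear T" and T_le: "\<And>c. \<bar>T c\<bar> \<le> norm c"
    for T :: "complex \<Rightarrow> real"
  proof (rule exp_moments_eq_0_imp_eq_0[where C = C and w = "\<lambda>x. T (v x)", OF _ _ _ _ _ x0])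
    show "continuous_on {0<..} (\<lambda>x. T (v x))"
      by (rule bounded_linear.continuous_on[OF T cont])
    show "\<bar>T (v x)\<bar> \<le> C * x" "\<bar>T (v x)\<bar> \<le> C" "\<bar>T (v x)\<bar> \<le> C / x\<^sup>2" if "0 < x" for x
      using order_trans[OF T_le at_0[OF that]] order_trans[OF T_le bounded[OF that]]
        order_trans[OF T_le at_top[OF that]] by simp_all
    fix n
    have eq: "(\<lambda>x. T (v x) * exp (- (real n + 1) * x)) = (\<lambda>x. T (v x * of_real (exp (- (real n + 1) * x))))"
      using linear.scaleR[OF bounded_linear.linear[OF T]]
      by (simp add: fun_eq_iff scaleR_conv_of_real mult.commute)
    have "set_integrable lborel {0<..} (\<lambda>x. v x * of_real (exp (- (real n + 1) * x)))"
      by (rule set_integrable_mult_exp_neg[where C = C]) (simp_all add: cont bounded at_top)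
    then have "(LINT x:{0<..}|lborel. T (v x) * exp (- (real n + 1) * x))
        = T (LINT x:{0<..}|lborel. v x * of_real (exp (- (real n + 1) * x)))"
      unfolding eq by (rule set_integral_bounded_linear[OF T])
    then show "(LINT x:{0<..}|lborel. T (v x) * exp (- (real n + 1) * x)) = 0"
      using mom[of n] linear_0[OF bounded_linear.linear[OF T]] by simp
  qed
  show ?thesis
    using component[OF bounded_linear_Re abs_Re_le_cmod] component[OF bounded_linear_Im abs_Im_le_cmod]
    by (simp add: complex_eq_iff)
qed

lemma laplace_imaginary_axis_diff:
  fixes \<phi> :: "real \<Rightarrow> complex"
  assumes cont: "continuous_on {0<..} \<phi>"
    and bounded: "\<And>x. 0 < x \<Longrightarrow> norm (\<phi> x) \<le> C"
    and at_top: "\<And>x. 0 < x \<Longrightarrow> norm (\<phi> x) \<le> C / x\<^sup>2"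
    and s: "0 \<le> s"
  shows "(LINT x:{0<..}|lborel. of_real (1 - exp (- x)) * \<phi> x * of_real (exp (- s * x)))
    = laplace \<phi> (\<i> * of_real s) - laplace \<phi> (\<i> * of_real (s + 1))"
proof -
  have exp_diff: "(1 - exp (- x)) * exp (- s * x) = exp (- s * x) - exp (- (s + 1) * x)" for x :: real
    by (simp add: algebra_simps flip: exp_add)
  have "of_real (1 - exp (- x)) * \<phi> x * of_real (exp (- s * x))
      = \<phi> x * of_real ((1 - exp (- x)) * exp (- s * x))" for x
    by (simp only: of_real_mult mult_ac)
  then have "of_real (1 - exp (- x)) * \<phi> x * of_real (exp (- s * x))
      = \<phi> x * of_real (exp (- s * x)) - \<phi> x * of_real (exp (- (s + 1) * x))" for x
    by (simp only: exp_diff of_real_diff right_diff_distrib)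
  moreover have "set_integrable lborel {0<..} (\<lambda>x. \<phi> x * of_real (exp (- s * x)))"
    by (rule set_integrable_mult_exp_neg[where C = C]) (simp_all add: cont bounded at_top s)
  moreover have "set_integrable lborel {0<..} (\<lambda>x. \<phi> x * of_real (exp (- (s + 1) * x)))"
    by (rule set_integrable_mult_exp_neg[where C = C]) (simp_all add: cont bounded at_top s)
  ultimately show ?thesis
    unfolding laplace_imaginary_axis by (simp only: set_integral_diff(2))
qed

lemma laplace_imaginary_axis_eq_0_imp_eq_0:
  fixes \<phi> :: "real \<Rightarrow> complex"
  assumes cont: "continuous_on {0<..} \<phi>"
    and bounded: "\<And>x. 0 < x \<Longrightarrow> norm (\<phi> x) \<le> C"
    and at_top: "\<And>x. 0 < x \<Longrightarrow> norm (\<phi> x) \<le> C / x\<^sup>2"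
    and zero: "\<And>t. 0 < t \<Longrightarrow> laplace \<phi> (\<i> * of_real t) = 0"
    and x0: "0 < x0"
  shows "\<phi> x0 = 0"
proof -
  \<comment> \<open>The factor 1 - e^{-x} makes v vanish at 0, as needed for continuity of u |-> v (- ln u)
    at u = 1, while the exponential moments of v are still differences of values of the Laplace
    transform.\<close>
  define v where "v x = of_real (1 - exp (- x)) * \<phi> x" for x
  have "v x0 = 0"
  proof (rule exp_moments_eq_0_imp_eq_0_complex[where C = C, OF _ _ _ _ _ x0])
    show "continuous_on {0<..} v"
      unfolding v_def by (intro continuous_intros cont)
    fix x :: real
    assume x: "0 < x"
    have "\<bar>1 - exp (- x)\<bar> \<le> min x 1"
      using x exp_ge_add_one_self[of "- x"] by auto
    then have v_le: "norm (v x) \<le> min x 1 * norm (\<phi> x)"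
      unfolding v_def norm_mult norm_of_real by (rule mult_right_mono) simp
    have "min x 1 * norm (\<phi> x) \<le> x * C"
      using bounded[OF x] x by (intro mult_mono) auto
    then show "norm (v x) \<le> C * x"
      using v_le by (simp add: mult.commute)
    have "min x 1 * norm (\<phi> x) \<le> norm (\<phi> x)"
      using x by (intro mult_left_le_one_le) auto
    then show "norm (v x) \<le> C" "norm (v x) \<le> C / x\<^sup>2"
      using v_le bounded[OF x] at_top[OF x] by linarith+
  next
    fix n
    have "(LINT x:{0<..}|lborel. v x * of_real (exp (- (real n + 1) * x)))
        = laplace \<phi> (\<i> * of_real (real n + 1)) - laplace \<phi> (\<i> * of_real (real n + 2))"
      unfolding v_def using laplace_imaginary_axis_diff[OF cont bounded at_top, of "real n + 1"]
      by (simp add: add.assoc)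
    then show "(LINT x:{0<..}|lborel. v x * of_real (exp (- (real n + 1) * x))) = 0"
      using zero[of "real n + 1"] zero[of "real n + 2"] by simp
  qed
  moreover have "1 - exp (- x0) \<noteq> 0"
    using x0 by simp
  ultimately show ?thesis
    by (simp add: v_def)
qed

section \<open>The Laplace transform on the spaces C_{M,h}\<close>

lemma weight_seq_pos: "weight_seq M \<Longrightarrow> 0 < M p"
  by (simp add: weight_seq_def)

lemma quot_seq_pos: "weight_seq M \<Longrightarrow> 0 < quot_seq M p"
  by (simp add: quot_seq_def weight_seq_pos)

lemma quot_seq_mono:
  assumes "weight_seq M"
  shows "quot_seq M p \<le> quot_seq M (Suc p)"
proof -
  have "(M (Suc p))\<^sup>2 \<le> M p * M (Suc (Suc p))"
    using assms unfolding weight_seq_def by (metis Suc_eq_plus1 diff_Suc_1 le_add2)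
  then show ?thesis
    using weight_seq_pos[OF assms, of p] weight_seq_pos[OF assms, of "Suc p"]
    by (simp add: quot_seq_def divide_simps power2_eq_square mult.commute)
qed

context
  fixes M :: "nat \<Rightarrow> real" and h :: real and \<phi> :: "real \<Rightarrow> complex"
  assumes M: "weight_seq M" and h: "0 < h" and \<phi>: "\<phi> \<in> CM M h"
begin

lemma CM_norm_bound:
  assumes "0 < x"
  shows "x ^ p * norm (\<phi> x) \<le> CM_norm M h \<phi> * (h ^ p * M p)"
proof -
  obtain C where "\<forall>p. \<forall>x>0. x ^ p * norm (\<phi> x) / (h ^ p * M p) \<le> C"
    using \<phi> by (auto simp: CM_def)
  then have "bdd_above {x ^ p * norm (\<phi> x) / (h ^ p * M p) | p x. x > 0}"
    by (auto simp: bdd_above_def)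
  then have "x ^ p * norm (\<phi> x) / (h ^ p * M p) \<le> CM_norm M h \<phi>"
    unfolding CM_norm_def by (rule cSup_upper[rotated]) (use assms in blast)
  then show ?thesis
    using h weight_seq_pos[OF M, of p] by (simp add: divide_le_eq)
qed

lemma CM_norm_nonneg: "0 \<le> CM_norm M h \<phi>"
proof -
  have "norm (\<phi> 1) \<le> CM_norm M h \<phi> * M 0"
    using CM_norm_bound[of 1 0] by simp
  then have "0 \<le> CM_norm M h \<phi> * M 0"
    using norm_ge_zero order_trans by blast
  then show ?thesis
    using weight_seq_pos[OF M, of 0] by (simp add: zero_le_mult_iff)
qed

lemma CM_norm_mult_nonneg: "0 \<le> CM_norm M h \<phi> * (h ^ q * M q)"
  using CM_norm_nonneg h weight_seq_pos[OF M, of q] by simp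

lemma CM_norm_le_inverse_square:
  assumes x: "0 < x"
  shows "norm (\<phi> x) \<le> CM_norm M h \<phi> * (M 0 + h\<^sup>2 * M 2)"
    and "norm (\<phi> x) \<le> CM_norm M h \<phi> * (M 0 + h\<^sup>2 * M 2) / x\<^sup>2"
proof -
  have "0 \<le> CM_norm M h \<phi> * M 0" "0 \<le> CM_norm M h \<phi> * (h\<^sup>2 * M 2)"
    using CM_norm_mult_nonneg[of 0] CM_norm_mult_nonneg[of 2] by simp_all
  then show "norm (\<phi> x) \<le> CM_norm M h \<phi> * (M 0 + h\<^sup>2 * M 2)"
    and "norm (\<phi> x) \<le> CM_norm M h \<phi> * (M 0 + h\<^sup>2 * M 2) / x\<^sup>2"
    using CM_norm_bound[OF x, of 0] CM_norm_bound[OF x, of 2] x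
    by (simp_all add: distrib_left field_simps)
qed

lemma CM_moment_le_moment_majorant:
  assumes x: "0 < x"
  shows "x ^ p * norm (\<phi> x)
    \<le> CM_norm M h \<phi> * (h ^ Suc p * M (Suc p)) * moment_majorant (h * quot_seq M p) (h * quot_seq M (Suc p)) x"
proof -
  define K where "K = CM_norm M h \<phi> * (h ^ Suc p * M (Suc p))"
  have "0 \<le> K"
    unfolding K_def by (rule CM_norm_mult_nonneg)
  have M_pos: "0 < M p" "0 < M (Suc p)" using weight_seq_pos[OF M] by auto
  have "x ^ p * norm (\<phi> x) \<le> CM_norm M h \<phi> * (h ^ p * M p)"
    by (rule CM_norm_bound[OF x])
  also have "\<dots> = K * (1 / (h * quot_seq M p))"
    unfolding K_def quot_seq_def using h M_pos by (simp add: field_simps)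
  finally have bound0: "x ^ p * norm (\<phi> x) \<le> K * (1 / (h * quot_seq M p))" .
  have "x * (x ^ p * norm (\<phi> x)) \<le> K"
    using CM_norm_bound[OF x, of "Suc p"] by (simp add: K_def mult.assoc)
  then have bound1: "x ^ p * norm (\<phi> x) \<le> K * (1 / x)"
    using x by (simp add: field_simps)
  have "x\<^sup>2 * (x ^ p * norm (\<phi> x)) \<le> CM_norm M h \<phi> * (h ^ Suc (Suc p) * M (Suc (Suc p)))"
    using CM_norm_bound[OF x, of "Suc (Suc p)"] by (simp add: power2_eq_square mult.assoc)
  also have "\<dots> = K * (h * quot_seq M (Suc p))"
    unfolding K_def quot_seq_def using h M_pos by (simp add: field_simps)
  finally have bound2: "x ^ p * norm (\<phi> x) \<le> K * (h * quot_seq M (Suc p) / x\<^sup>2)"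
    using x by (simp add: field_simps)
  have "K * moment_majorant (h * quot_seq M p) (h * quot_seq M (Suc p)) x
      = min (K * (1 / (h * quot_seq M p))) (min (K * (1 / x)) (K * (h * quot_seq M (Suc p) / x\<^sup>2)))"
    unfolding moment_majorant_def min_mult_distrib_left using \<open>0 \<le> K\<close> by simp
  then show ?thesis
    using bound0 bound1 bound2 by (simp add: K_def)
qed

lemma CM_moment_set_integrable: "set_integrable lborel {0<..} (\<lambda>x. x ^ p * norm (\<phi> x))"
proof -
  define K b a where "K = CM_norm M h \<phi> * (h ^ Suc p * M (Suc p))"
    and "b = h * quot_seq M p" and "a = h * quot_seq M (Suc p)"
  have "0 < b" "b \<le> a"
    using h quot_seq_pos[OF M] quot_seq_mono[OF M, of p] by (auto simp: a_def b_def)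
  then have majorant: "set_integrable lborel {0<..} (\<lambda>x. K * moment_majorant b a x)"
    using moment_majorant_set_integral(1) by simp
  have "set_borel_measurable lborel {0<..} (\<lambda>x. x ^ p * norm (\<phi> x))"
    using \<phi> by (intro set_borel_measurable_continuous_on_Ioi continuous_intros) (simp add: CM_def)
  then show ?thesis
  proof (rule set_integrable_bound[OF majorant])
    have "norm (x ^ p * norm (\<phi> x)) \<le> norm (K * moment_majorant b a x)" if "0 < x" for x
      using CM_moment_le_moment_majorant[OF that, of p] that by (simp add: K_def a_def b_def)
    then show "AE x in lborel. x \<in> {0<..} \<longrightarrow> norm (x ^ p * norm (\<phi> x)) \<le> norm (K * moment_majorant b a x)"
      by (intro AE_I2) simp
  qed
qed

lemma CM_moment_set_integral_le:
  "(LINT x:{0<..}|lborel. x ^ p * norm (\<phi> x))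
     \<le> CM_norm M h \<phi> * (h ^ Suc p * M (Suc p)) * (2 + ln (quot_seq M (Suc p) / quot_seq M p))"
proof -
  define K b a where "K = CM_norm M h \<phi> * (h ^ Suc p * M (Suc p))"
    and "b = h * quot_seq M p" and "a = h * quot_seq M (Suc p)"
  have "0 < b" "b \<le> a"
    using h quot_seq_pos[OF M] quot_seq_mono[OF M, of p] by (auto simp: a_def b_def)
  have "(LINT x:{0<..}|lborel. x ^ p * norm (\<phi> x)) \<le> (LINT x:{0<..}|lborel. K * moment_majorant b a x)"
    using CM_moment_set_integrable moment_majorant_set_integral(1)[OF \<open>0 < b\<close> \<open>b \<le> a\<close>]
      CM_moment_le_moment_majorant
    by (intro set_integral_mono) (auto simp: K_def a_def b_def)
  also have "\<dots> = K * (2 + ln a - ln b)"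
    using moment_majorant_set_integral(2)[OF \<open>0 < b\<close> \<open>b \<le> a\<close>] by simp
  also have "\<dots> = K * (2 + ln (quot_seq M (Suc p) / quot_seq M p))"
    using h quot_seq_pos[OF M, of p] quot_seq_pos[OF M, of "Suc p"]
    by (simp add: a_def b_def ln_mult ln_div)
  finally show ?thesis
    by (simp add: K_def)
qed

lemma CM_finite_moments: "finite_moments \<phi>"
  using \<phi> CM_moment_set_integrable
  by (simp add: finite_moments_def CM_def set_borel_measurable_continuous_on_Ioi)

context
  fixes C0 H :: real
  assumes H: "1 \<le> H" and sm: "sm_cond M C0 H"
begin

lemma norm_higher_deriv_laplace_CM_le:
  assumes z: "z \<in> upper_half"
  shows "norm ((deriv ^^ p) (laplace \<phi>) z)
    \<le> h * (2 + C0 * H) * CM_norm M h \<phi> * ((H * h) ^ p * shift_seq M p)"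
proof -
  define K where "K = CM_norm M h \<phi> * (h ^ Suc p * M (Suc p))"
  have "0 \<le> K"
    unfolding K_def by (rule CM_norm_mult_nonneg)
  have "2 \<le> 2 * H ^ p"
    using H by simp
  have "norm ((deriv ^^ p) (laplace \<phi>) z) \<le> (LINT x:{0<..}|lborel. x ^ p * norm (\<phi> x))"
    by (rule norm_higher_deriv_laplace_le[OF CM_finite_moments z])
  also have "\<dots> \<le> K * (2 + ln (quot_seq M (Suc p) / quot_seq M p))"
    unfolding K_def by (rule CM_moment_set_integral_le)
  also have "\<dots> \<le> K * (2 + C0 * H ^ Suc p)"
    using sm \<open>0 \<le> K\<close> by (intro mult_left_mono) (auto simp: sm_cond_def)
  also have "\<dots> \<le> K * ((2 + C0 * H) * H ^ p)"
    using \<open>2 \<le> 2 * H ^ p\<close> \<open>0 \<le> K\<close> by (intro mult_left_mono) (auto simp: algebra_simps)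
  also have "\<dots> = h * (2 + C0 * H) * CM_norm M h \<phi> * ((H * h) ^ p * shift_seq M p)"
    by (simp add: K_def shift_seq_def power_mult_distrib)
  finally show ?thesis .
qed

lemma norm_higher_deriv_laplace_CM_div_le:
  assumes z: "z \<in> upper_half"
  shows "norm ((deriv ^^ p) (laplace \<phi>) z) / ((H * h) ^ p * shift_seq M p)
    \<le> h * (2 + C0 * H) * CM_norm M h \<phi>"
proof -
  have "0 < (H * h) ^ p * shift_seq M p"
    using H h weight_seq_pos[OF M] by (simp add: shift_seq_def)
  then show ?thesis
    using norm_higher_deriv_laplace_CM_le[OF z] by (simp add: divide_le_eq)
qed

lemma laplace_CM_mem_AN: "laplace \<phi> \<in> AN (shift_seq M) (H * h)"
  unfolding AN_def
  using laplace_holomorphic[OF CM_finite_moments] norm_higher_deriv_laplace_CM_div_le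
  by blast

lemma AN_norm_laplace_CM_le:
  "AN_norm (shift_seq M) (H * h) (laplace \<phi>) \<le> h * (2 + C0 * H) * CM_norm M h \<phi>"
  unfolding AN_norm_def
proof (rule cSup_least)
  show "{norm ((deriv ^^ p) (laplace \<phi>) z) / ((H * h) ^ p * shift_seq M p) | p z. z \<in> upper_half} \<noteq> {}"
    by (auto simp: upper_half_def intro!: exI[of _ \<i>])
qed (use norm_higher_deriv_laplace_CM_div_le in blast)

end

end

lemma CM_mono:
  assumes M: "weight_seq M" and h: "0 < h" and "h \<le> h'"
  shows "CM M h \<subseteq> CM M h'"
proof
  fix \<phi>
  assume "\<phi> \<in> CM M h"
  then obtain C where cont: "continuous_on {0<..} \<phi>"
    and C: "\<And>p x. 0 < x \<Longrightarrow> x ^ p * norm (\<phi> x) / (h ^ p * M p) \<le> C"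
    by (auto simp: CM_def)
  have "x ^ p * norm (\<phi> x) / (h' ^ p * M p) \<le> x ^ p * norm (\<phi> x) / (h ^ p * M p)" if "0 < x" for p x
    using that h \<open>h \<le> h'\<close> weight_seq_pos[OF M, of p]
    by (intro divide_left_mono mult_right_mono power_mono) auto
  then show "\<phi> \<in> CM M h'"
    using cont C unfolding CM_def by (blast intro: order_trans)
qed

lemma CM_diff:
  assumes M: "weight_seq M" and h: "0 < h" and "\<phi> \<in> CM M h" and "\<psi> \<in> CM M h"
  shows "(\<lambda>x. \<phi> x - \<psi> x) \<in> CM M h"
proof -
  obtain C1 C2 where C1: "\<And>p x. 0 < x \<Longrightarrow> x ^ p * norm (\<phi> x) / (h ^ p * M p) \<le> C1"
    and C2: "\<And>p x. 0 < x \<Longrightarrow> x ^ p * norm (\<psi> x) / (h ^ p * M p) \<le> C2"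
    using assms(3,4) by (auto simp: CM_def)
  have "x ^ p * norm (\<phi> x - \<psi> x) / (h ^ p * M p) \<le> C1 + C2" if x: "0 < x" for p x
  proof -
    have "x ^ p * norm (\<phi> x - \<psi> x) \<le> x ^ p * norm (\<phi> x) + x ^ p * norm (\<psi> x)"
      using mult_left_mono[OF norm_triangle_ineq4, of "x ^ p"] x by (simp add: distrib_left)
    then have "x ^ p * norm (\<phi> x - \<psi> x) / (h ^ p * M p)
        \<le> x ^ p * norm (\<phi> x) / (h ^ p * M p) + x ^ p * norm (\<psi> x) / (h ^ p * M p)"
      using h weight_seq_pos[OF M, of p] by (simp add: divide_right_mono flip: add_divide_distrib)
    then show ?thesis
      using C1[OF x, of p] C2[OF x, of p] by linarith
  qed
  moreover have "continuous_on {0<..} (\<lambda>x. \<phi> x - \<psi> x)"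
    using assms(3,4) by (auto simp: CM_def intro!: continuous_intros)
  ultimately show ?thesis
    unfolding CM_def by blast
qed

lemma CM_roumieu_diff:
  assumes M: "weight_seq M" and "\<phi> \<in> CM_roumieu M" and "\<psi> \<in> CM_roumieu M"
  obtains h where "0 < h" and "\<phi> \<in> CM M h" and "\<psi> \<in> CM M h" and "(\<lambda>x. \<phi> x - \<psi> x) \<in> CM M h"
proof -
  obtain h1 h2 where "0 < h1" "\<phi> \<in> CM M h1" "0 < h2" "\<psi> \<in> CM M h2"
    using assms(2,3) by (auto simp: CM_roumieu_def)
  then have "0 < max h1 h2" "\<phi> \<in> CM M (max h1 h2)" "\<psi> \<in> CM M (max h1 h2)"
    using CM_mono[OF M] by (auto simp: less_max_iff_disj subset_iff)
  then show ?thesis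
    using CM_diff[OF M] that by blast
qed

lemma laplace_CM_roumieu_inj:
  assumes M: "weight_seq M" and "\<phi> \<in> CM_roumieu M" and "\<psi> \<in> CM_roumieu M"
    and eq: "\<forall>z\<in>upper_half. laplace \<phi> z = laplace \<psi> z" and "0 < x"
  shows "\<phi> x = \<psi> x"
proof -
  obtain h where h: "0 < h" and "\<phi> \<in> CM M h" "\<psi> \<in> CM M h" and diff: "(\<lambda>x. \<phi> x - \<psi> x) \<in> CM M h"
    using CM_roumieu_diff[OF assms(1-3)] .
  then have "laplace (\<lambda>x. \<phi> x - \<psi> x) (\<i> * of_real t) = 0" if "0 < t" for t
    using that eq CM_finite_moments[OF M h]
    by (subst laplace_diff) (auto simp: upper_half_def)
  moreover have "continuous_on {0<..} (\<lambda>x. \<phi> x - \<psi> x)"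
    using diff by (simp add: CM_def)
  ultimately have "\<phi> x - \<psi> x = 0"
    using laplace_imaginary_axis_eq_0_imp_eq_0[OF _ CM_norm_le_inverse_square[OF M h diff] _ \<open>0 < x\<close>]
    by blast
  then show ?thesis
    by simp
qed

theorem lemma2p12:
  fixes M :: "nat \<Rightarrow> real" and C0 H :: real
  assumes "weight_seq M" and "C0 > 0" and "H > 1" and "sm_cond M C0 H"
  shows "(\<forall>h>0. (\<forall>\<phi>\<in>CM M h. laplace \<phi> \<in> AN (shift_seq M) (H * h)) \<and>
            (\<exists>C. \<forall>\<phi>\<in>CM M h.
                 AN_norm (shift_seq M) (H * h) (laplace \<phi>) \<le> C * CM_norm M h \<phi>))
       \<and> (\<forall>\<phi>\<in>CM_roumieu M. laplace \<phi> \<in> AN_roumieu (shift_seq M))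
       \<and> (\<forall>h>0. \<exists>k>0. \<exists>C. \<forall>\<phi>\<in>CM M h. laplace \<phi> \<in> AN (shift_seq M) k \<and>
                 AN_norm (shift_seq M) k (laplace \<phi>) \<le> C * CM_norm M h \<phi>)
       \<and> (\<forall>\<phi>\<in>CM_roumieu M. \<forall>\<psi>\<in>CM_roumieu M.
            (\<forall>z\<in>upper_half. laplace \<phi> z = laplace \<psi> z) \<longrightarrow> (\<forall>x>0. \<phi> x = \<psi> x))"
proof -
  \<comment> \<open>(sm) is used only through H \<ge> 1.\<close>
  have "1 \<le> H"
    using \<open>H > 1\<close> by simp
  have fixed_h: "\<forall>\<phi>\<in>CM M h. laplace \<phi> \<in> AN (shift_seq M) (H * h) \<and>
      AN_norm (shift_seq M) (H * h) (laplace \<phi>) \<le> h * (2 + C0 * H) * CM_norm M h \<phi>" if "0 < h" for h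
    using laplace_CM_mem_AN AN_norm_laplace_CM_le assms(1,4) \<open>1 \<le> H\<close> that by blast
  moreover have "\<forall>\<phi>\<in>CM_roumieu M. laplace \<phi> \<in> AN_roumieu (shift_seq M)"
    using fixed_h \<open>H > 1\<close> unfolding CM_roumieu_def AN_roumieu_def
    by (fastforce intro!: bexI[of _ "H * _"])
  moreover have "\<forall>h>0. \<exists>k>0. \<exists>C. \<forall>\<phi>\<in>CM M h. laplace \<phi> \<in> AN (shift_seq M) k \<and>
      AN_norm (shift_seq M) k (laplace \<phi>) \<le> C * CM_norm M h \<phi>"
    using fixed_h \<open>H > 1\<close> by (metis mult_pos_pos order.strict_trans zero_less_one)
  ultimately show ?thesis
    using laplace_CM_roumieu_inj[OF assms(1)] by blast
qed

end
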